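(* Let $K$ be a circle of radius $1$ and centre $O$. Let $A,B\in K$ be such that the triangle $OAB$ is positively (counter-clockwise) oriented and $\eta=\angle BOA<1/10$. Let $K_A$ and $K_B$ be the circles obtained by rotating $K$ about the points $A$ and $B$ in the negative direction by the angles $\alpha$ and $\beta$ respectively, where $0<\alpha<3\beta/4$ and $\beta<\eta$. Then one of the intersection points of $K_A$ and $K_B$ lies outside $K$, and its distance from $A$ is less than $50\eta$.
   Context: The positive direction of rotation is counter-clockwise; the negative direction is clockwise. *)

theory Defs
  imports "HOL-Analysis.Analysis"
begin

text \<open>Points of the plane are complex numbers. Rotation about the point P by the
  angle t (positive = counter-clockwise, negative = clockwise).\<close>
definition rot :: "complex \<Rightarrow> real \<Rightarrow> complex \<Rightarrow> complex" where
  "rot P t z = P + (z - P) * cis t"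

end

theory Submission
  imports Defs
begin

text \<open>After a rigid motion, C = 0, A = 1 and B = cis \<eta>. Then K_A and K_B are the unit circles
  centred at 1 - cis (-\<alpha>) and cis \<eta> - cis (\<eta> - \<beta>); with d the difference of these centres,
  the point 1 - cis (-\<alpha>) + cis \<theta> of K_A lies on K_B iff |d + cis \<theta>| = 1. As Re d \<ge> 0 this
  norm is at least 1 at \<theta> = 0, and Taylor estimates show that it is at most 1 at \<theta> = 12\<eta>, so
  the intermediate value theorem yields an intersection point with 0 \<le> \<theta> \<le> 12\<eta>. It lies
  outside K because \<alpha> and \<theta> are in (0, \<pi>), and its distance from A is
  |cis \<theta> - cis (-\<alpha>)| \<le> \<theta> + \<alpha> < 13\<eta>.\<close>

lemma cos_ge_one_minus_sq_div_2: "1 - x\<^sup>2 / 2 \<le> cos (x::real)"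
proof -
  have "cos x = 1 - 2 * (sin (x / 2))\<^sup>2"
    using cos_double_sin[of "x / 2"] by simp
  moreover have "(sin (x / 2))\<^sup>2 \<le> (x / 2)\<^sup>2"
    using abs_sin_x_le_abs_x[of "x / 2"] by (metis abs_ge_zero power2_abs power_mono)
  ultimately show ?thesis by (simp add: power_divide)
qed

lemma sin_ge_x_minus_cube_div_6:
  assumes "0 \<le> x"
  shows "x - x ^ 3 / 6 \<le> sin (x::real)"
proof -
  let ?f = "\<lambda>x. sin x - x + x ^ 3 / 6"
  have "\<exists>y. (?f has_real_derivative y) (at u) \<and> 0 \<le> y" for u
  proof (intro exI conjI)
    show "(?f has_real_derivative cos u - 1 + u\<^sup>2 / 2) (at u)"
      by (auto intro!: derivative_eq_intros simp: field_simps power2_eq_square)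
    show "0 \<le> cos u - 1 + u\<^sup>2 / 2"
      using cos_ge_one_minus_sq_div_2[of u] by simp
  qed
  then have "?f 0 \<le> ?f x"
    using DERIV_nonneg_imp_nondecreasing[OF assms] by blast
  then show ?thesis by simp
qed

lemma norm_cis_diff_le: "norm (cis s - cis t) \<le> \<bar>s - t\<bar>"
proof -
  have "(norm (cis s - cis t))\<^sup>2 = 2 - 2 * cos (s - t)"
    unfolding cmod_power2 by (simp add: cos_diff power2_eq_square algebra_simps)
  also have "\<dots> \<le> \<bar>s - t\<bar>\<^sup>2"
    using cos_ge_one_minus_sq_div_2[of "s - t"] by simp
  finally show ?thesis
    using abs_ge_zero power2_le_imp_le by blast
qed

lemma dist_rot [simp]: "dist (rot P t z) (rot P t w) = dist z w"
proof -
  have "rot P t z - rot P t w = (z - w) * cis t"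
    by (simp add: rot_def algebra_simps)
  then show ?thesis by (simp add: dist_norm norm_mult)
qed

lemma rot_image_sphere: "rot P t ` sphere C r = sphere (rot P t C) r"
proof
  have rot_inverse: "rot P (-s) (rot P s z) = z" for s z
    by (simp add: rot_def mult.assoc cis_mult)
  show "rot P t ` sphere C r \<subseteq> sphere (rot P t C) r"
    by auto
  show "sphere (rot P t C) r \<subseteq> rot P t ` sphere C r"
  proof
    fix w assume "w \<in> sphere (rot P t C) r"
    moreover have w_eq: "rot P t (rot P (-t) w) = w"
      using rot_inverse[of "-t" w] by simp
    moreover have "dist C (rot P (-t) w) = dist (rot P t C) w"
      using dist_rot[of P t C "rot P (-t) w"] by (simp only: w_eq)
    ultimately show "w \<in> rot P t ` sphere C r"
      by (metis mem_sphere rev_image_eqI)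
  qed
qed

lemma norm_add_cis_power2:
  "(norm (d + cis \<theta>))\<^sup>2 = 1 + (Re d)\<^sup>2 + (Im d)\<^sup>2 + 2 * Re d * cos \<theta> + 2 * Im d * sin \<theta>"
  unfolding cmod_power2 by (simp add: power2_eq_square algebra_simps)

lemma norm_one_minus_cis_add_cis_gt_1:
  assumes "0 < \<alpha>" "\<alpha> < pi" "0 \<le> \<theta>" "\<theta> < pi"
  shows "1 < norm (1 - cis (-\<alpha>) + cis \<theta>)"
proof -
  have "0 < (1 - cos \<alpha>) * (1 + cos \<theta>)"
    using cos_monotone_0_pi[of 0 \<alpha>] cos_monotone_0_pi[of \<theta> pi] assms by simp
  moreover have "0 \<le> sin \<alpha> * sin \<theta>"
    using assms by (simp add: sin_ge_zero)
  moreover have "(norm (1 - cis (-\<alpha>) + cis \<theta>))\<^sup>2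
      = 1 + 2 * ((1 - cos \<alpha>) * (1 + cos \<theta>)) + 2 * (sin \<alpha> * sin \<theta>)"
    unfolding cmod_power2 by (simp add: power2_eq_square algebra_simps)
      (use sin_cos_squared_add3[of \<alpha>] sin_cos_squared_add3[of \<theta>] in linarith)
  ultimately have "1\<^sup>2 < (norm (1 - cis (-\<alpha>) + cis \<theta>))\<^sup>2"
    by simp
  then show ?thesis
    by (rule power2_less_imp_less) simp
qed

lemma cos_diff_cos_bounds:
  fixes \<beta> \<eta> :: real
  assumes "0 \<le> \<beta>" "\<beta> \<le> \<eta>" "\<eta> \<le> pi"
  shows "0 \<le> cos (\<eta> - \<beta>) - cos \<eta>" "cos (\<eta> - \<beta>) - cos \<eta> \<le> \<eta> * \<beta>"
proof -
  have prod: "cos (\<eta> - \<beta>) - cos \<eta> = 2 * (sin ((2 * \<eta> - \<beta>) / 2) * sin (\<beta> / 2))"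
    using cos_diff_cos[of "\<eta> - \<beta>" \<eta>] by (simp add: field_simps)
  have s1: "0 \<le> sin ((2 * \<eta> - \<beta>) / 2)"
    by (rule sin_ge_zero) (use assms in simp_all)
  have s2: "sin ((2 * \<eta> - \<beta>) / 2) \<le> (2 * \<eta> - \<beta>) / 2"
    by (rule sin_x_le_x) (use assms in simp)
  have s3: "0 \<le> sin (\<beta> / 2)"
    by (rule sin_ge_zero) (use assms in simp_all)
  have s4: "sin (\<beta> / 2) \<le> \<beta> / 2"
    by (rule sin_x_le_x) (use assms in simp)
  have "sin ((2 * \<eta> - \<beta>) / 2) * sin (\<beta> / 2) \<le> (2 * \<eta> - \<beta>) / 2 * (\<beta> / 2)"
    using s1 s2 s3 s4 by (rule_tac mult_mono) simp_all
  moreover have "2 * ((2 * \<eta> - \<beta>) / 2 * (\<beta> / 2)) \<le> \<eta> * \<beta>"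
    using assms by (simp add: field_simps)
  ultimately show "cos (\<eta> - \<beta>) - cos \<eta> \<le> \<eta> * \<beta>"
    unfolding prod by linarith
  show "0 \<le> cos (\<eta> - \<beta>) - cos \<eta>"
    unfolding prod using s1 s3 by simp
qed

lemma sin_diff_sin_bounds:
  fixes \<beta> \<eta> :: real
  assumes "0 \<le> \<beta>" "\<beta> \<le> \<eta>" "\<eta> \<le> 1/10"
  shows "99/100 * \<beta> \<le> sin \<eta> - sin (\<eta> - \<beta>)" "sin \<eta> - sin (\<eta> - \<beta>) \<le> \<beta>"
proof -
  have prod: "sin \<eta> - sin (\<eta> - \<beta>) = 2 * (sin (\<beta> / 2) * cos ((2 * \<eta> - \<beta>) / 2))"
    using sin_diff_sin[of \<eta> "\<eta> - \<beta>"] by (simp add: field_simps)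
  have "((2 * \<eta> - \<beta>) / 2)\<^sup>2 \<le> (1/10)\<^sup>2"
    by (rule power_mono) (use assms in simp_all)
  then have "((2 * \<eta> - \<beta>) / 2)\<^sup>2 \<le> 1/100"
    by (simp add: power_divide)
  then have cos_lower: "199/200 \<le> cos ((2 * \<eta> - \<beta>) / 2)"
    using cos_ge_one_minus_sq_div_2[of "(2 * \<eta> - \<beta>) / 2"] by linarith
  have "(\<beta> / 2) ^ 3 \<le> (\<beta> / 2) / 400"
  proof -
    have "(\<beta> / 2)\<^sup>2 \<le> (1/20)\<^sup>2"
      by (rule power_mono) (use assms in simp_all)
    then have "\<beta> / 2 * (\<beta> / 2)\<^sup>2 \<le> \<beta> / 2 * (1/400)"
      by (rule_tac mult_left_mono) (use assms in \<open>simp_all add: power_divide\<close>)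
    then show ?thesis
      by (simp add: power3_eq_cube power2_eq_square)
  qed
  then have sin_lower: "2399/2400 * (\<beta> / 2) \<le> sin (\<beta> / 2)"
    using sin_ge_x_minus_cube_div_6[of "\<beta> / 2"] assms(1) by linarith
  have sin_upper: "sin (\<beta> / 2) \<le> \<beta> / 2"
    by (rule sin_x_le_x) (use assms in simp)
  have "2399/2400 * (\<beta> / 2) * (199/200) \<le> sin (\<beta> / 2) * cos ((2 * \<eta> - \<beta>) / 2)"
    by (rule mult_mono) (use cos_lower sin_lower assms in simp_all)
  then show "99/100 * \<beta> \<le> sin \<eta> - sin (\<eta> - \<beta>)"
    unfolding prod using assms by linarith
  have "sin (\<beta> / 2) * cos ((2 * \<eta> - \<beta>) / 2) \<le> \<beta> / 2 * 1"
    by (rule mult_mono) (use sin_upper cos_lower assms in simp_all)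
  then show "sin \<eta> - sin (\<eta> - \<beta>) \<le> \<beta>"
    unfolding prod by linarith
qed

text \<open>Here a and b stand for the coordinates of the difference of the two centres, which are of
  order \<eta>\<beta> and -\<beta>; at the angle 12\<eta> the negative term 2 b sin (12\<eta>) \<approx> 24\<eta>b dominates.\<close>

lemma trig_quadratic_estimate:
  fixes a b \<beta> \<eta> :: real
  assumes "0 < \<beta>" "\<beta> < \<eta>" "\<eta> < 1/10"
    and "0 \<le> a" "a \<le> 41/32 * (\<eta> * \<beta>)" and "-\<beta> \<le> b" "b \<le> -(6/25) * \<beta>"
  shows "a\<^sup>2 + b\<^sup>2 + 2 * a * cos (12 * \<eta>) + 2 * b * sin (12 * \<eta>) \<le> 0"
proof -
  have a_sq: "a\<^sup>2 \<le> 1/50 * (\<eta> * \<beta>)"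
  proof -
    have "\<eta> * \<beta> \<le> 1/100"
      using mult_strict_mono[of \<eta> "1/10" \<beta> "1/10"] assms by simp
    have "a\<^sup>2 \<le> (41/32 * (\<eta> * \<beta>))\<^sup>2"
      by (rule power_mono) (use assms in simp_all)
    also have "\<dots> = 1681/1024 * (\<eta> * \<beta>) * (\<eta> * \<beta>)"
      by (simp add: power2_eq_square)
    also have "\<dots> \<le> 1681/1024 * (\<eta> * \<beta>) * (1/100)"
      by (rule mult_left_mono) (use \<open>\<eta> * \<beta> \<le> 1/100\<close> assms in simp_all)
    finally show ?thesis
      using assms by simp
  qed
  have b_sq: "b\<^sup>2 \<le> \<eta> * \<beta>"
  proof -
    have "\<bar>b\<bar> \<le> \<bar>\<beta>\<bar>"
      using assms by (simp add: abs_le_iff)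
    then have "b\<^sup>2 \<le> \<beta>\<^sup>2"
      by (simp add: abs_le_square_iff)
    also have "\<dots> \<le> \<eta> * \<beta>"
      using assms by (simp add: power2_eq_square mult_right_mono)
    finally show ?thesis .
  qed
  have "a * cos (12 * \<eta>) \<le> a"
    using mult_left_le[OF cos_le_one \<open>0 \<le> a\<close>] .
  then have cos_term: "2 * a * cos (12 * \<eta>) \<le> 41/16 * (\<eta> * \<beta>)"
    using assms by linarith
  have "(12 * \<eta>) ^ 3 \<le> 12 * \<eta> * (36/25)"
  proof -
    have "(12 * \<eta>)\<^sup>2 \<le> (6/5)\<^sup>2"
      by (rule power_mono) (use assms in simp_all)
    then have "12 * \<eta> * (12 * \<eta>)\<^sup>2 \<le> 12 * \<eta> * (36/25)"
      by (rule_tac mult_left_mono) (use assms in \<open>simp_all add: power_divide\<close>)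
    then show ?thesis
      by (simp add: power3_eq_cube power2_eq_square)
  qed
  then have sin_lower: "19/25 * (12 * \<eta>) \<le> sin (12 * \<eta>)"
    using sin_ge_x_minus_cube_div_6[of "12 * \<eta>"] assms by linarith
  have sin_term: "2 * b * sin (12 * \<eta>) \<le> -(2736/625) * (\<eta> * \<beta>)"
  proof -
    have "b * sin (12 * \<eta>) \<le> b * (19/25 * (12 * \<eta>))"
      by (rule mult_left_mono_neg) (use sin_lower assms in simp_all)
    also have "\<dots> \<le> -(6/25) * \<beta> * (19/25 * (12 * \<eta>))"
      by (rule mult_right_mono) (use assms in simp_all)
    finally show ?thesis
      by (simp add: mult.commute)
  qed
  show ?thesis
    using a_sq b_sq cos_term sin_term assms by simp
qed

lemma exists_norm_add_cis_eq_1: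
  assumes "0 \<le> Re d" "0 \<le> T" "norm (d + cis T) \<le> 1"
  obtains \<theta> where "0 \<le> \<theta>" "\<theta> \<le> T" "norm (d + cis \<theta>) = 1"
proof -
  have "1 \<le> norm (d + cis 0)"
    using complex_Re_le_cmod[of "d + 1"] assms(1) by simp
  moreover have "continuous_on {0..T} (\<lambda>t. norm (d + cis t))"
    by (intro continuous_intros)
  ultimately show ?thesis
    using IVT2'[of "\<lambda>t. norm (d + cis t)" T 1 0] assms(2,3) that by blast
qed

lemma rotated_centres_gap_estimate:
  fixes \<alpha> \<beta> \<eta> :: real
  assumes "0 < \<eta>" "\<eta> < 1/10" "0 < \<alpha>" "\<alpha> < 3 * \<beta> / 4" "\<beta> < \<eta>"
  defines "d \<equiv> (1 - cis (-\<alpha>)) - (cis \<eta> - cis (\<eta> - \<beta>))"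
  shows "0 \<le> Re d"
    and "norm (d + cis (12 * \<eta>)) \<le> 1"
proof -
  have ranges: "0 < \<beta>" "0 \<le> \<beta>" "\<beta> \<le> \<eta>" "\<eta> \<le> pi" "\<eta> \<le> 1/10"
    using assms pi_gt3 by linarith+
  have Re_d: "Re d = (1 - cos \<alpha>) + (cos (\<eta> - \<beta>) - cos \<eta>)"
    and Im_d: "Im d = sin \<alpha> - (sin \<eta> - sin (\<eta> - \<beta>))"
    by (simp_all add: d_def)
  have "\<alpha>\<^sup>2 \<le> (3 * \<beta> / 4)\<^sup>2"
    by (rule power_mono) (use assms in simp_all)
  also have "\<dots> \<le> 9/16 * (\<eta> * \<beta>)"
    using assms ranges by (simp add: power2_eq_square mult_right_mono)
  finally have "1 - cos \<alpha> \<le> 9/32 * (\<eta> * \<beta>)"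
    using cos_ge_one_minus_sq_div_2[of \<alpha>] by linarith
  moreover have "0 \<le> sin \<alpha>" "sin \<alpha> \<le> \<alpha>"
    using assms pi_gt3 by (auto intro: sin_ge_zero sin_x_le_x)
  ultimately have bounds: "0 \<le> Re d" "Re d \<le> 41/32 * (\<eta> * \<beta>)" "-\<beta> \<le> Im d" "Im d \<le> -(6/25) * \<beta>"
    using cos_diff_cos_bounds[OF ranges(2-4)] sin_diff_sin_bounds[OF ranges(2,3,5)] cos_le_one[of \<alpha>]
      ranges(1) assms(1-5)
    unfolding Re_d Im_d by linarith+
  then show "0 \<le> Re d"
    by blast
  have "(norm (d + cis (12 * \<eta>)))\<^sup>2 \<le> 1"
    using trig_quadratic_estimate[OF ranges(1) assms(5,2) bounds]
    unfolding norm_add_cis_power2 by linarith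
  then show "norm (d + cis (12 * \<eta>)) \<le> 1"
    by (simp add: abs_square_le_1)
qed

theorem lemma3:
  fixes C A B :: complex and \<eta> \<alpha> \<beta> :: real
  assumes "A \<in> sphere C 1" and "B \<in> sphere C 1"
    and "B - C = (A - C) * cis \<eta>"
    and "0 < \<eta>" and "\<eta> < 1/10"
    and "0 < \<alpha>" and "\<alpha> < 3 * \<beta> / 4" and "\<beta> < \<eta>"
  shows "\<exists>z. z \<in> rot A (-\<alpha>) ` sphere C 1 \<and> z \<in> rot B (-\<beta>) ` sphere C 1
            \<and> z \<notin> cball C 1 \<and> dist z A < 50 * \<eta>"
proof -
  define u where "u = A - C"
  have "norm u = 1"
    using assms(1) by (simp add: u_def dist_norm norm_minus_commute)
  then have dist_frame: "dist z P = norm w" if "z - P = u * w" for z P w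
    using that by (simp add: dist_norm norm_mult)
  have A: "A = C + u" and B: "B = C + u * cis \<eta>"
    using assms(3) by (simp_all add: u_def algebra_simps)
  have centre_A: "rot A (-\<alpha>) C = C + u * (1 - cis (-\<alpha>))"
    and centre_B: "rot B (-\<beta>) C = C + u * (cis \<eta> - cis (\<eta> - \<beta>))"
    by (simp_all add: A B rot_def algebra_simps mult.assoc cis_mult)
  define d where "d = (1 - cis (-\<alpha>)) - (cis \<eta> - cis (\<eta> - \<beta>))"
  obtain \<theta> where \<theta>: "0 \<le> \<theta>" "\<theta> \<le> 12 * \<eta>" "norm (d + cis \<theta>) = 1"
    using exists_norm_add_cis_eq_1[of d "12 * \<eta>"] rotated_centres_gap_estimate[OF assms(4-8)] assms(4)
    unfolding d_def by auto
  define q where "q = 1 - cis (-\<alpha>) + cis \<theta>"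
  define z where "z = C + u * q"
  have "dist z (rot A (-\<alpha>) C) = 1" "dist z (rot B (-\<beta>) C) = 1"
    using \<theta>(3) by (auto intro!: trans[OF dist_frame] simp: z_def q_def centre_A centre_B d_def algebra_simps)
  then have "z \<in> rot A (-\<alpha>) ` sphere C 1" "z \<in> rot B (-\<beta>) ` sphere C 1"
    by (simp_all add: rot_image_sphere dist_commute)
  moreover have "z \<notin> cball C 1"
    using norm_one_minus_cis_add_cis_gt_1[of \<alpha> \<theta>] dist_frame[of z C q] \<theta> assms(5-8) pi_gt3
    by (simp add: z_def q_def dist_commute)
  moreover have "dist z A \<le> \<theta> + \<alpha>"
    using norm_cis_diff_le[of \<theta> "-\<alpha>"] dist_frame[of z A "cis \<theta> - cis (-\<alpha>)"] \<theta>(1) assms(6)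
    by (simp add: z_def q_def A algebra_simps)
  ultimately show ?thesis
    using \<theta>(2) assms(4,7,8) by fastforce
qed

end
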